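(* For all natural numbers $n\geq 1$, \[a_3(n)=3p(n)-p(n+1)-2p(n+2)+p(n+3).\]
   Context: $p(n)$ denotes the number of partitions of $n$. $a_3(n)$ denotes the number of partitions of $n$ in which the smallest part occurs at least $3$ times. *)

theory Defs
  imports Main "HOL-Library.Multiset"
begin

definition partitions :: "nat \<Rightarrow> nat multiset set" where
  "partitions n = {M. (\<forall>x\<in>#M. 0 < x) \<and> sum_mset M = n}"

definition p :: "nat \<Rightarrow> nat" where
  "p n = card (partitions n)"

definition a3 :: "nat \<Rightarrow> nat" where
  "a3 n = card {M \<in> partitions n. M \<noteq> {#} \<and> count M (Min (set_mset M)) \<ge> 3}"

end

theory Submission
  imports Defs
begin

text \<open>
  Write \<open>a\<^sub>k(n)\<close> for the number of partitions of \<open>n\<close> whose smallest part occurs at least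
  \<open>k\<close> times, and \<open>p\<^sub>\<ge>(m, n)\<close> for the number of partitions of \<open>n\<close> into parts \<open>\<ge> m\<close>.
  Classifying by the smallest part \<open>m\<close> and removing \<open>k\<close> copies of it gives
  \<open>a\<^sub>k(n) = \<Sum>\<^sub>m p\<^sub>\<ge>(m, n - k m)\<close>. Splitting off the partitions that contain \<open>m\<close>,
  \<open>p\<^sub>\<ge>(m, j) = p\<^sub>\<ge>(m + 1, j) + p\<^sub>\<ge>(m, j - m)\<close>, and applying this termwise yields
  \<open>a\<^sub>k\<^sub>+\<^sub>1(n) = a\<^sub>k(n) - a\<^sub>k(n + k) + p(n)\<close>, the term \<open>p(n)\<close> being the summand \<open>m = 1\<close>
  lost by the index shift. Iterating from \<open>a\<^sub>1(n) = p(n)\<close> gives the formula for \<open>a\<^sub>3\<close>.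
\<close>

lemma size_le_sum_mset_pos: "(\<forall>x\<in>#M. 0 < (x::nat)) \<Longrightarrow> size M \<le> sum_mset M"
  by (induction M) auto

lemma member_le_sum_mset: "(x::nat) \<in># M \<Longrightarrow> x \<le> sum_mset M"
  by (induction M) auto

lemma Min_mset_eq_iff:
  assumes "(m::'a::linorder) \<in># M"
  shows "Min (set_mset M) = m \<longleftrightarrow> (\<forall>x\<in>#M. m \<le> x)"
  using assms by (auto intro: Min_eqI)

lemma min_part_mult_ge_iff:
  assumes "0 < k"
  shows "(M \<noteq> {#} \<and> k \<le> count M (Min (set_mset M)) \<and> Min (set_mset M) = m)
    \<longleftrightarrow> (\<forall>x\<in>#M. (m::'a::linorder) \<le> x) \<and> replicate_mset k m \<subseteq># M"
proof
  assume M: "M \<noteq> {#} \<and> k \<le> count M (Min (set_mset M)) \<and> Min (set_mset M) = m"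
  then have "m \<in># M" by (metis Min_in finite_set_mset set_mset_eq_empty_iff)
  with M have "\<forall>x\<in>#M. m \<le> x" by (simp add: Min_mset_eq_iff)
  moreover from M have "k \<le> count M m" by metis
  ultimately show "(\<forall>x\<in>#M. m \<le> x) \<and> replicate_mset k m \<subseteq># M"
    by (simp add: count_le_replicate_mset_subset_eq)
next
  assume M: "(\<forall>x\<in>#M. m \<le> x) \<and> replicate_mset k m \<subseteq># M"
  with assms have "m \<in># M"
    by (metis count_greater_zero_iff count_le_replicate_mset_subset_eq order.strict_trans2)
  with M have "Min (set_mset M) = m" by (simp add: Min_mset_eq_iff)
  with M \<open>m \<in># M\<close> show "M \<noteq> {#} \<and> k \<le> count M (Min (set_mset M)) \<and> Min (set_mset M) = m"
    by (auto simp: count_le_replicate_mset_subset_eq)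
qed

lemma finite_partitions: "finite (partitions n)"
proof (rule finite_subset)
  show "partitions n \<subseteq> (\<Union>s\<in>{0..n}. multisets_of_size {0..n} s)"
  proof
    fix M assume "M \<in> partitions n"
    then have pos: "\<forall>x\<in>#M. 0 < x" and sum: "sum_mset M = n"
      by (auto simp: partitions_def)
    have "size M \<le> n" using size_le_sum_mset_pos[OF pos] sum by simp
    moreover have "set_mset M \<subseteq> {0..n}" using member_le_sum_mset sum by fastforce
    ultimately show "M \<in> (\<Union>s\<in>{0..n}. multisets_of_size {0..n} s)"
      by (auto simp: multisets_of_size_def)
  qed
qed auto

definition partitions_ge :: "nat \<Rightarrow> nat \<Rightarrow> nat multiset set" where
  "partitions_ge m n = {M \<in> partitions n. \<forall>x\<in>#M. m \<le> x}"

definition p_ge :: "nat \<Rightarrow> nat \<Rightarrow> nat" where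
  "p_ge m n = card (partitions_ge m n)"

definition p_copies :: "nat \<Rightarrow> nat \<Rightarrow> nat \<Rightarrow> nat" where
  "p_copies k m n = card {M \<in> partitions_ge m n. replicate_mset k m \<subseteq># M}"

definition a_mult :: "nat \<Rightarrow> nat \<Rightarrow> nat" where
  "a_mult k n = card {M \<in> partitions n. M \<noteq> {#} \<and> k \<le> count M (Min (set_mset M))}"

lemma finite_partitions_ge: "finite (partitions_ge m n)"
  unfolding partitions_ge_def using finite_partitions by simp

lemma p_ge_Suc_0 [simp]: "p_ge (Suc 0) n = p n"
proof -
  have "partitions_ge (Suc 0) n = partitions n"
    by (auto simp: partitions_ge_def partitions_def Suc_le_eq)
  then show ?thesis by (simp add: p_ge_def p_def)
qed

lemma p_copies_add:
  assumes "0 < m"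
  shows "p_copies k m (n + k * m) = p_ge m n"
proof -
  let ?R = "replicate_mset k m"
  have "bij_betw (\<lambda>N. N + ?R) (partitions_ge m n) {M \<in> partitions_ge m (n + k * m). ?R \<subseteq># M}"
  proof (rule bij_betw_byWitness[where f' = "\<lambda>M. M - ?R"])
    show "\<forall>N\<in>partitions_ge m n. N + ?R - ?R = N" by simp
    show "\<forall>M\<in>{M \<in> partitions_ge m (n + k * m). ?R \<subseteq># M}. M - ?R + ?R = M" by simp
    show "(\<lambda>N. N + ?R) ` partitions_ge m n \<subseteq> {M \<in> partitions_ge m (n + k * m). ?R \<subseteq># M}"
      using assms by (auto simp: partitions_ge_def partitions_def split: if_splits)
    show "(\<lambda>M. M - ?R) ` {M \<in> partitions_ge m (n + k * m). ?R \<subseteq># M} \<subseteq> partitions_ge m n"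
    proof clarify
      fix M assume M: "M \<in> partitions_ge m (n + k * m)" "?R \<subseteq># M"
      then have "sum_mset (M - ?R) = n"
        by (simp add: sum_mset_diff partitions_ge_def partitions_def)
      with M show "M - ?R \<in> partitions_ge m n"
        by (auto simp: partitions_ge_def partitions_def dest: in_diffD)
    qed
  qed
  then show ?thesis by (simp add: p_copies_def p_ge_def bij_betw_same_card)
qed

lemma p_copies_eq_0:
  assumes "n < k * m"
  shows "p_copies k m n = 0"
proof -
  have "\<not> replicate_mset k m \<subseteq># M" if "M \<in> partitions n" for M
  proof
    assume "replicate_mset k m \<subseteq># M"
    then have "k * m \<le> sum_mset M"
      by (metis sum_mset_replicate_mset of_nat_id subset_mset.le_iff_add sum_mset.union le_add1)
    with that assms show False by (simp add: partitions_def)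
  qed
  then have "{M \<in> partitions_ge m n. replicate_mset k m \<subseteq># M} = {}"
    by (auto simp: partitions_ge_def)
  then show ?thesis unfolding p_copies_def by (metis card.empty)
qed

lemma p_copies_eq:
  assumes "0 < m"
  shows "p_copies k m n = (if k * m \<le> n then p_ge m (n - k * m) else 0)"
  using p_copies_add[OF assms, of k "n - k * m"] p_copies_eq_0[of n k m] by auto

lemma p_ge_split:
  assumes "0 < m"
  shows "p_ge m n = p_ge (Suc m) n + p_copies 1 m n"
proof -
  let ?B = "{M \<in> partitions_ge m n. replicate_mset 1 m \<subseteq># M}"
  have split: "partitions_ge m n = partitions_ge (Suc m) n \<union> ?B"
    by (auto simp: partitions_ge_def Suc_le_eq order.order_iff_strict)
  have disjoint: "partitions_ge (Suc m) n \<inter> ?B = {}"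
    by (auto simp: partitions_ge_def)
  have "finite ?B"
    by (rule finite_subset[OF _ finite_partitions_ge]) blast
  from card_Un_disjoint[OF finite_partitions_ge this disjoint] split
  show ?thesis by (simp add: p_ge_def p_copies_def)
qed

lemma p_copies_Suc:
  assumes "0 < m"
  shows "int (p_copies (Suc k) m n) = int (p_copies k m n) - int (p_copies k (Suc m) (n + k))"
proof (cases "k * m \<le> n")
  case True
  then obtain j where n: "n = j + k * m" by (metis le_add_diff_inverse2)
  have "p_copies k m n = p_ge (Suc m) j + p_copies 1 m j"
    using p_copies_add[OF assms] p_ge_split[OF assms] n by simp
  moreover have "p_copies k (Suc m) (n + k) = p_ge (Suc m) j"
    using p_copies_add[of "Suc m" k j] n by (simp add: algebra_simps)
  moreover have "p_copies (Suc k) m n = p_copies 1 m j"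
    using p_copies_eq[OF assms] n by (simp add: algebra_simps)
  ultimately show ?thesis by simp
next
  case False
  then show ?thesis by (simp add: p_copies_eq_0)
qed

lemma a_mult_eq_sum:
  assumes "0 < k" "n \<le> N"
  shows "a_mult k n = (\<Sum>m = 1..N. p_copies k m n)"
proof -
  define A where "A m = {M \<in> partitions_ge m n. replicate_mset k m \<subseteq># M}" for m
  have A_iff: "M \<in> A m \<longleftrightarrow> M \<in> partitions n \<and> M \<noteq> {#} \<and>
      k \<le> count M (Min (set_mset M)) \<and> Min (set_mset M) = m" for M m
    using min_part_mult_ge_iff[OF assms(1)] by (auto simp: A_def partitions_ge_def)
  have "{M \<in> partitions n. M \<noteq> {#} \<and> k \<le> count M (Min (set_mset M))} = (\<Union>m\<in>{1..N}. A m)"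
  proof (rule set_eqI, rule iffI)
    fix M assume M: "M \<in> {M \<in> partitions n. M \<noteq> {#} \<and> k \<le> count M (Min (set_mset M))}"
    then have min_in: "Min (set_mset M) \<in># M" by (simp add: Min_in)
    with M have "0 < Min (set_mset M)" by (simp add: partitions_def)
    moreover from M min_in assms(2) have "Min (set_mset M) \<le> N"
      using member_le_sum_mset[OF min_in] by (simp add: partitions_def)
    ultimately have "M \<in> A (Min (set_mset M))" "Min (set_mset M) \<in> {1..N}"
      using M A_iff by auto
    then show "M \<in> (\<Union>m\<in>{1..N}. A m)" by blast
  qed (auto simp: A_iff)
  then have "a_mult k n = card (\<Union>m\<in>{1..N}. A m)" by (simp add: a_mult_def)
  also have "\<dots> = (\<Sum>m = 1..N. card (A m))"
  proof (rule card_UN_disjoint)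
    show "\<forall>m\<in>{1..N}. finite (A m)"
      unfolding A_def using finite_partitions_ge by simp
    show "\<forall>m\<in>{1..N}. \<forall>m'\<in>{1..N}. m \<noteq> m' \<longrightarrow> A m \<inter> A m' = {}"
      by (auto simp: A_iff)
  qed simp
  finally show ?thesis by (simp add: A_def p_copies_def)
qed

lemma a_mult_1:
  assumes "0 < n"
  shows "a_mult 1 n = p n"
proof -
  have "M \<noteq> {#} \<and> 1 \<le> count M (Min (set_mset M))" if "M \<in> partitions n" for M
  proof -
    from that assms have "M \<noteq> {#}" by (auto simp: partitions_def)
    then have "Min (set_mset M) \<in># M" by (simp add: Min_in)
    with \<open>M \<noteq> {#}\<close> show ?thesis by (simp add: Suc_le_eq)
  qed
  then have "{M \<in> partitions n. M \<noteq> {#} \<and> 1 \<le> count M (Min (set_mset M))} = partitions n"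
    by blast
  then show ?thesis unfolding a_mult_def p_def by (rule arg_cong)
qed

lemma a_mult_Suc:
  assumes "0 < k"
  shows "int (a_mult (Suc k) n) = int (a_mult k n) - int (a_mult k (n + k)) + int (p n)"
proof -
  let ?N = "n + k"
  have "int (a_mult (Suc k) n) = (\<Sum>m = 1..?N. int (p_copies (Suc k) m n))"
    using a_mult_eq_sum[of "Suc k" n ?N] by simp
  also have "\<dots> = (\<Sum>m = 1..?N. int (p_copies k m n)) - (\<Sum>m = 1..?N. int (p_copies k (Suc m) ?N))"
    by (simp add: p_copies_Suc sum_subtractf)
  also have "(\<Sum>m = 1..?N. int (p_copies k (Suc m) ?N)) = (\<Sum>m = Suc 1..Suc ?N. int (p_copies k m ?N))"
    by (rule sum.shift_bounds_cl_Suc_ivl[symmetric])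
  also have "\<dots> = (\<Sum>m = 1..Suc ?N. int (p_copies k m ?N)) - int (p n)"
    by (simp add: sum.atLeast_Suc_atMost p_copies_eq)
  finally show ?thesis
    using a_mult_eq_sum[OF assms, of n ?N] a_mult_eq_sum[OF assms, of ?N "Suc ?N"] by simp
qed

lemma a_mult_2: "0 < n \<Longrightarrow> int (a_mult 2 n) = 2 * int (p n) - int (p (n + 1))"
  using a_mult_Suc[of 1 n] a_mult_1[of n] a_mult_1[of "n + 1"] by (simp add: numeral_2_eq_2)

theorem theorem1p4:
  fixes n :: nat
  assumes "n \<ge> 1"
  shows "int (a3 n) = 3 * int (p n) - int (p (n + 1)) - 2 * int (p (n + 2)) + int (p (n + 3))"
proof -
  have "a3 n = a_mult 3 n" by (simp add: a3_def a_mult_def)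
  then have "int (a3 n) = int (a_mult 2 n) - int (a_mult 2 (n + 2)) + int (p n)"
    using a_mult_Suc[of 2 n] by (simp add: numeral_3_eq_3)
  then show ?thesis
    using a_mult_2[of n] a_mult_2[of "n + 2"] assms by (simp add: eval_nat_numeral)
qed

end
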